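(* Let $x\in J$. Then $x$ is an extreme point of $B_J$ if and only if $x$ has NPR hereditarily and $\|x\|_2=1$.
   Context: For a real sequence $x=(x(n))_{n\in\mathbb N}$ let $\|x\|_J=\sup\bigl(\sum_{i=1}^n|\sum_{k\in I_i}x(k)|^2\bigr)^{1/2}$ over all $n$ and all families of pairwise disjoint intervals $I_1,\dots,I_n$ of $\mathbb N$ (intervals: nonempty sets of consecutive positive integers, possibly infinite). $J=\{x:\|x\|_J<\infty\}$ with closed unit ball $B_J$; $\|\cdot\|_2$ is the $\ell_2$ norm; for $x\in J$ the series $\sum_n x(n)$ and $\sum_{n\in I}x(n)$ (for intervals $I$) converge. For $A\subset\mathbb N$, $x|_A$ equals $x$ on $A$ and $0$ off $A$. A vector $x\in J$ has non-positive remainder (NPR) if $|\sum_n x(n)|^2\le\sum_n|x(n)|^2$; it has NPR hereditarily if $x|_I$ has NPR for every interval $I$ of $\mathbb N$. *)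

theory Defs
  imports "HOL-Analysis.Analysis"
begin

text \<open>Sequences are functions nat => real; the positive integers 1,2,3,... of the
paper are indexed here by 0,1,2,... (a harmless shift).\<close>

definition nat_interval :: "nat set \<Rightarrow> bool" where
  "nat_interval I \<longleftrightarrow> I \<noteq> {} \<and> (\<forall>a b c. a \<in> I \<longrightarrow> c \<in> I \<longrightarrow> a \<le> b \<longrightarrow> b \<le> c \<longrightarrow> b \<in> I)"

definition restr :: "(nat \<Rightarrow> real) \<Rightarrow> nat set \<Rightarrow> nat \<Rightarrow> real" where
  "restr x A = (\<lambda>n. if n \<in> A then x n else 0)"

definition isum :: "(nat \<Rightarrow> real) \<Rightarrow> nat set \<Rightarrow> real" where
  "isum x A = (\<Sum>n. restr x A n)"

definition J_vals :: "(nat \<Rightarrow> real) \<Rightarrow> real set" where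
  "J_vals x = {sqrt (\<Sum>i<n. \<bar>isum x (I i)\<bar>^2) | (n::nat) (I::nat \<Rightarrow> nat set).
      (\<forall>i<n. nat_interval (I i)) \<and> (\<forall>i<n. \<forall>j<n. i \<noteq> j \<longrightarrow> I i \<inter> I j = {})}"

definition J_norm :: "(nat \<Rightarrow> real) \<Rightarrow> real" where
  "J_norm x = Sup (J_vals x)"

text \<open>The James space; the convergence of the interval series is part of the
membership condition (it follows anyway from boundedness of the J-norm).\<close>
definition J_space :: "(nat \<Rightarrow> real) set" where
  "J_space = {x. (\<forall>I. nat_interval I \<longrightarrow> summable (restr x I)) \<and> bdd_above (J_vals x)}"

definition B_J :: "(nat \<Rightarrow> real) set" where
  "B_J = {x \<in> J_space. J_norm x \<le> 1}"

definition l2_norm :: "(nat \<Rightarrow> real) \<Rightarrow> real" where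
  "l2_norm x = sqrt (\<Sum>n. (x n)^2)"

definition NPR :: "(nat \<Rightarrow> real) \<Rightarrow> bool" where
  "NPR x \<longleftrightarrow> \<bar>\<Sum>n. x n\<bar>^2 \<le> (\<Sum>n. \<bar>x n\<bar>^2)"

definition NPR_hered :: "(nat \<Rightarrow> real) \<Rightarrow> bool" where
  "NPR_hered x \<longleftrightarrow> (\<forall>I. nat_interval I \<longrightarrow> NPR (restr x I))"

text \<open>Extreme point of a set of sequences (the space of sequences is not a
real_vector instance, so this unfolds the library notion extreme_point_of:
x is in S and not in the open segment between two points of S).\<close>
definition extreme_point_seq :: "(nat \<Rightarrow> real) \<Rightarrow> (nat \<Rightarrow> real) set \<Rightarrow> bool" where
  "extreme_point_seq x S \<longleftrightarrow> x \<in> S \<and>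
     (\<forall>a\<in>S. \<forall>b\<in>S. \<forall>t::real. a \<noteq> b \<and> 0 < t \<and> t < 1 \<longrightarrow> x \<noteq> (\<lambda>n. (1 - t) * a n + t * b n))"

end

(*
  Every x in J satisfies ||x||_2 <= ||x||_J (test the norm on families of singletons), and
  NPR hereditarily is exactly the equality case: adjoining to an interval I the singletons
  outside I shows that ||x||_J = ||x||_2 forces (sum_I x)^2 <= sum_I x^2, and conversely NPR
  on every interval bounds each sum of squared interval sums by the l2 mass of x. Sufficiency
  then follows because B_J lies in the strictly convex l2 ball.

  For necessity, an extreme point x has ||x||_J = 1 (otherwise move x(0)), and x is not the
  midpoint of x + d and x - d for a small dipole d = c (e_(N-1) - e_N). Such a dipole only
  changes families in which some interval contains exactly one of N-1 and N, so the norm of x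
  is almost attained by families not straddling N. An exchange argument at the shared point N
  (merge the two intervals through N, or give N to one side only) then shows by induction on N
  that families inside [0, N) have squared sums at most sum_(k<N) x(k)^2; letting N grow gives
  ||x||_J <= ||x||_2.
*)

theory Submission
  imports Defs
begin

definition order_convex :: "nat set \<Rightarrow> bool" where
  "order_convex A \<longleftrightarrow> (\<forall>a b c. a \<in> A \<longrightarrow> c \<in> A \<longrightarrow> a \<le> b \<longrightarrow> b \<le> c \<longrightarrow> b \<in> A)"

lemma nat_interval_iff: "nat_interval A \<longleftrightarrow> A \<noteq> {} \<and> order_convex A"
  by (simp add: nat_interval_def order_convex_def)

lemma order_convexD: "order_convex A \<Longrightarrow> a \<in> A \<Longrightarrow> c \<in> A \<Longrightarrow> a \<le> b \<Longrightarrow> b \<le> c \<Longrightarrow> b \<in> A"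
  unfolding order_convex_def by blast

lemma order_convex_empty [simp]: "order_convex {}"
  and order_convex_singleton [simp]: "order_convex {k}"
  and order_convex_lessThan [simp]: "order_convex {..<k}"
  and order_convex_atLeast [simp]: "order_convex {k..}"
  by (auto simp: order_convex_def)

lemma order_convex_Int: "order_convex A \<Longrightarrow> order_convex B \<Longrightarrow> order_convex (A \<inter> B)"
  unfolding order_convex_def by blast

lemma order_convex_Un:
  assumes "order_convex A" "order_convex B" "p \<in> A" "p \<in> B"
  shows "order_convex (A \<union> B)"
  unfolding order_convex_def
  by (metis Un_iff assms le_cases order_convexD)

definition interval_family :: "nat set set \<Rightarrow> bool" where
  "interval_family F \<longleftrightarrow> finite F \<and> (\<forall>A\<in>F. order_convex A) \<and> disjoint F"

lemma interval_family_subset: "interval_family G \<Longrightarrow> F \<subseteq> G \<Longrightarrow> interval_family F"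
  unfolding interval_family_def by (meson finite_subset pairwise_subset subsetD)

lemma interval_family_Un:
  assumes "interval_family F" "interval_family G" "\<And>A B. A \<in> F \<Longrightarrow> B \<in> G \<Longrightarrow> A \<inter> B = {}"
  shows "interval_family (F \<union> G)"
  using assms unfolding interval_family_def by (auto intro!: disjoint_union)

lemma interval_family_singleton: "order_convex A \<Longrightarrow> interval_family {A}"
  by (simp add: interval_family_def)

lemma interval_family_points: "finite K \<Longrightarrow> interval_family ((\<lambda>k. {k}) ` K)"
  by (auto simp: interval_family_def disjoint_def)

lemma interval_family_Int_lessThan:
  assumes "interval_family F"
  shows "interval_family ((\<lambda>A. A \<inter> {..<M}) ` F)"
  using assms unfolding interval_family_def disjoint_def by (auto intro: order_convex_Int)

lemma interval_family_disjointD: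
  "interval_family F \<Longrightarrow> A \<in> F \<Longrightarrow> B \<in> F \<Longrightarrow> A \<noteq> B \<Longrightarrow> A \<inter> B = {}"
  unfolding interval_family_def disjoint_def by blast

lemma interval_family_split:
  assumes F: "interval_family F" and "0 < N"
    and A0: "A0 \<in> F" "N - 1 \<in> A0 \<longleftrightarrow> N \<notin> A0" and A: "A \<in> F"
  shows "A \<subseteq> {..<N} \<or> A \<subseteq> {N..}"
proof (rule ccontr)
  assume "\<not> ?thesis"
  then obtain a b where a: "a \<in> A" "a < N" and b: "b \<in> A" "N \<le> b"
    by (auto simp: subset_iff not_less)
  have "order_convex A"
    using F A by (simp add: interval_family_def)
  then have "N - 1 \<in> A" "N \<in> A"
    using a b by (auto intro: order_convexD[of A a b])
  then have "A \<noteq> A0"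
    using A0(2) by auto
  then have "A \<inter> A0 = {}"
    using A A0(1) by (intro interval_family_disjointD[OF F])
  then show False
    using A0(2) \<open>N - 1 \<in> A\<close> \<open>N \<in> A\<close> by auto
qed

lemma restr_add: "restr (\<lambda>n. x n + y n) A = (\<lambda>n. restr x A n + restr y A n)"
  by (auto simp: restr_def)

lemma summable_restr_add:
  "summable (restr x A) \<Longrightarrow> summable (restr y A) \<Longrightarrow> summable (restr (\<lambda>n. x n + y n) A)"
  unfolding restr_add by (rule summable_add)

lemma summable_restr_nonneg: "summable f \<Longrightarrow> (\<And>n. 0 \<le> f n) \<Longrightarrow> summable (restr f A)"
  by (rule summable_comparison_test'[of f 0]) (auto simp: restr_def)

lemma suminf_restr_Compl:
  assumes "summable f" "\<And>n. 0 \<le> f n"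
  shows "suminf f = suminf (restr f A) + suminf (restr f (- A))"
proof -
  have "f = (\<lambda>k. restr f A k + restr f (- A) k)"
    by (auto simp: restr_def)
  then show ?thesis
    using suminf_add summable_restr_nonneg[OF assms] by metis
qed

lemma sum_restr_disjoint: "finite F \<Longrightarrow> disjoint F \<Longrightarrow> (\<Sum>A\<in>F. restr f A k) = restr f (\<Union>F) k"
proof (induction F rule: finite_induct)
  case (insert A F)
  then have "A \<inter> \<Union>F = {}"
    by (auto simp: disjoint_def)
  with insert show ?case
    by (auto simp: restr_def pairwise_insert)
qed (simp add: restr_def)

lemma isum_empty [simp]: "isum x {} = 0"
  by (simp add: isum_def restr_def)

lemma isum_finite: "finite A \<Longrightarrow> isum x A = (\<Sum>n\<in>A. x n)"
  unfolding isum_def by (subst suminf_finite[of A]) (auto simp: restr_def)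

lemma isum_singleton [simp]: "isum x {k} = x k"
  by (simp add: isum_finite)

lemma isum_Un:
  assumes "A \<inter> B = {}" "summable (restr x A)" "summable (restr x B)"
  shows "isum x (A \<union> B) = isum x A + isum x B"
proof -
  have "restr x (A \<union> B) = (\<lambda>n. restr x A n + restr x B n)"
    using assms(1) by (auto simp: restr_def fun_eq_iff)
  then show ?thesis
    unfolding isum_def using suminf_add[OF assms(2,3)] by simp
qed

lemma isum_add:
  "summable (restr x A) \<Longrightarrow> summable (restr y A) \<Longrightarrow> isum (\<lambda>n. x n + y n) A = isum x A + isum y A"
  unfolding isum_def restr_add by (rule suminf_add[symmetric])

lemma summable_restr_point_mass: "summable (restr (\<lambda>n. if n = k then c else 0) A)"
  by (rule summable_finite[of "{k}"]) (auto simp: restr_def)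

lemma isum_point_mass: "isum (\<lambda>n. if n = k then c else 0) A = (if k \<in> A then c else 0)"
  unfolding isum_def by (subst suminf_finite[of "{k}"]) (auto simp: restr_def)

lemma summable_restr_add_point_mass:
  "summable (restr x A) \<Longrightarrow> summable (restr (\<lambda>n. x n + (if n = k then c else 0)) A)"
  by (intro summable_restr_add summable_restr_point_mass)

lemma isum_add_point_mass:
  "summable (restr x A) \<Longrightarrow> isum (\<lambda>n. x n + (if n = k then c else 0)) A = isum x A + (if k \<in> A then c else 0)"
  by (simp add: isum_add summable_restr_point_mass isum_point_mass)

lemma tendsto_isum_Int_lessThan:
  assumes "summable (restr x A)"
  shows "(\<lambda>M. isum x (A \<inter> {..<M})) \<longlonglongrightarrow> isum x A"
proof -
  have partial_sums: "(\<Sum>k<M. restr x A k) = isum x (A \<inter> {..<M})" for M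
    by (simp add: isum_finite restr_def sum.inter_restrict Int_commute[of A])
  show ?thesis
    using summable_LIMSEQ[OF assms] unfolding partial_sums isum_def[of x A] .
qed

definition J_sum :: "(nat \<Rightarrow> real) \<Rightarrow> nat set set \<Rightarrow> real" where
  "J_sum x F = (\<Sum>A\<in>F. (isum x A)\<^sup>2)"

lemma J_sum_nonneg: "0 \<le> J_sum x F"
  by (simp add: J_sum_def sum_nonneg)

lemma J_sum_singleton [simp]: "J_sum x {A} = (isum x A)\<^sup>2"
  by (simp add: J_sum_def)

lemma J_sum_points: "J_sum x ((\<lambda>k. {k}) ` K) = (\<Sum>k\<in>K. (x k)\<^sup>2)"
  by (simp add: J_sum_def sum.reindex)

lemma J_sum_remove: "finite F \<Longrightarrow> A \<in> F \<Longrightarrow> J_sum x F = J_sum x (F - {A}) + (isum x A)\<^sup>2"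
  unfolding J_sum_def by (simp add: sum.remove)

lemma J_sum_Un:
  assumes "finite F" "finite G" "\<And>A B. A \<in> F \<Longrightarrow> B \<in> G \<Longrightarrow> A \<inter> B = {}"
  shows "J_sum x (F \<union> G) = J_sum x F + J_sum x G"
proof -
  have "(isum x A)\<^sup>2 = 0" if "A \<in> F \<inter> G" for A
    using assms(3)[of A A] that by simp
  then show ?thesis
    unfolding J_sum_def using assms(1,2) by (intro sum.union_inter_neutral) auto
qed

lemma J_sum_Int_lessThan:
  assumes "interval_family F"
  shows "J_sum x ((\<lambda>A. A \<inter> {..<M}) ` F) = (\<Sum>A\<in>F. (isum x (A \<inter> {..<M}))\<^sup>2)"
  unfolding J_sum_def comp_def[of "\<lambda>A. (isum x A)\<^sup>2" "\<lambda>A. A \<inter> {..<M}", symmetric]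
proof (rule sum.reindex_nontrivial)
  show "finite F"
    using assms by (simp add: interval_family_def)
next
  fix A B
  assume "A \<in> F" "B \<in> F" "A \<noteq> B" "A \<inter> {..<M} = B \<inter> {..<M}"
  then have "A \<inter> {..<M} = {}"
    using interval_family_disjointD[OF assms] by blast
  then show "(isum x (A \<inter> {..<M}))\<^sup>2 = 0"
    by simp
qed

lemma sqrt_J_sum_add_le:
  assumes "\<And>A. A \<in> F \<Longrightarrow> summable (restr x A)" "\<And>A. A \<in> F \<Longrightarrow> summable (restr y A)"
  shows "sqrt (J_sum (\<lambda>n. x n + y n) F) \<le> sqrt (J_sum x F) + sqrt (J_sum y F)"
proof -
  have "sqrt (J_sum (\<lambda>n. x n + y n) F) = L2_set (\<lambda>A. isum x A + isum y A) F"
    unfolding J_sum_def L2_set_def using assms by (simp add: isum_add)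
  also have "\<dots> \<le> L2_set (isum x) F + L2_set (isum y) F"
    by (rule L2_set_triangle_ineq)
  finally show ?thesis
    by (simp add: J_sum_def L2_set_def)
qed

lemma J_sum_point_mass:
  assumes "interval_family F"
  shows "J_sum (\<lambda>n. if n = k then c else 0) F = (if k \<in> \<Union>F then c\<^sup>2 else 0)"
proof -
  have "J_sum (\<lambda>n. if n = k then c else 0) F = (\<Sum>B\<in>F. if k \<in> B then c\<^sup>2 else 0)"
    unfolding J_sum_def by (intro sum.cong) (simp_all add: isum_point_mass)
  also have "\<dots> = (\<Sum>B\<in>{B \<in> F. k \<in> B}. c\<^sup>2)"
    using assms by (simp add: interval_family_def flip: sum.inter_filter)
  also have "\<dots> = (if k \<in> \<Union>F then c\<^sup>2 else 0)"
  proof (cases "k \<in> \<Union>F")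
    case True
    then obtain A where "A \<in> F" "k \<in> A" by blast
    then have "{B \<in> F. k \<in> B} = {A}"
      using interval_family_disjointD[OF assms] by blast
    then show ?thesis
      using True by simp
  next
    case False
    then have no_member: "{B \<in> F. k \<in> B} = {}"
      by blast
    show ?thesis
      unfolding no_member using False by simp
  qed
  finally show ?thesis .
qed

lemma J_sum_add_point_mass_le:
  assumes "interval_family F" "\<And>A. A \<in> F \<Longrightarrow> summable (restr x A)"
  shows "sqrt (J_sum (\<lambda>n. x n + (if n = k then c else 0)) F) \<le> sqrt (J_sum x F) + \<bar>c\<bar>"
proof -
  have "sqrt (J_sum (\<lambda>n. if n = k then c else 0) F) \<le> \<bar>c\<bar>"
    by (auto simp: J_sum_point_mass[OF assms(1)])
  then show ?thesis
    using sqrt_J_sum_add_le[of F x "\<lambda>n. if n = k then c else 0"] assms(2) summable_restr_point_mass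
    by fastforce
qed

lemma J_sum_add_point_mass_outside:
  assumes "k \<notin> \<Union>F" "\<And>A. A \<in> F \<Longrightarrow> summable (restr x A)"
  shows "J_sum (\<lambda>n. x n + (if n = k then c else 0)) F = J_sum x F"
  unfolding J_sum_def using assms
  by (intro sum.cong) (auto simp: isum_add summable_restr_point_mass isum_point_mass)

lemma summable_restr_J_space: "x \<in> J_space \<Longrightarrow> order_convex A \<Longrightarrow> summable (restr x A)"
  by (cases "A = {}") (auto simp: J_space_def nat_interval_iff restr_def)

lemma J_vals_eq: "J_vals x = {sqrt (J_sum x F) | F. interval_family F}"
proof (intro equalityI subsetI)
  fix r assume "r \<in> J_vals x"
  then obtain n :: nat and I :: "nat \<Rightarrow> nat set" where intervals: "\<forall>i<n. nat_interval (I i)"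
    and disj: "\<forall>i<n. \<forall>j<n. i \<noteq> j \<longrightarrow> I i \<inter> I j = {}"
    and r: "r = sqrt (\<Sum>i<n. \<bar>isum x (I i)\<bar>\<^sup>2)"
    unfolding J_vals_def by blast
  have "inj_on I {..<n}"
    using intervals disj by (metis inf.idem inj_onI lessThan_iff nat_interval_iff)
  then have "r = sqrt (J_sum x (I ` {..<n}))"
    by (simp add: r J_sum_def sum.reindex)
  moreover have "interval_family (I ` {..<n})"
    using intervals disj by (auto simp: interval_family_def disjoint_def nat_interval_iff)
  ultimately show "r \<in> {sqrt (J_sum x F) | F. interval_family F}"
    by blast
next
  fix r assume "r \<in> {sqrt (J_sum x F) | F. interval_family F}"
  then obtain F where F: "interval_family F" and r: "r = sqrt (J_sum x F)"
    by blast
  define G where "G = F - {{}}"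
  have "finite G"
    using F by (simp add: G_def interval_family_def)
  then obtain I where I: "bij_betw I {..<card G} G"
    using ex_bij_betw_nat_finite atLeast0LessThan by metis
  have "J_sum x F = J_sum x G"
    unfolding J_sum_def G_def using F by (intro sum.mono_neutral_right) (auto simp: interval_family_def)
  also have "\<dots> = (\<Sum>i<card G. (isum x (I i))\<^sup>2)"
    unfolding J_sum_def by (rule sum.reindex_bij_betw[OF I, symmetric])
  finally have "r = sqrt (\<Sum>i<card G. \<bar>isum x (I i)\<bar>\<^sup>2)"
    by (simp add: r)
  moreover have "\<forall>i<card G. nat_interval (I i)"
    using F bij_betw_apply[OF I] by (auto simp: G_def interval_family_def nat_interval_iff)
  moreover have "\<forall>i<card G. \<forall>j<card G. i \<noteq> j \<longrightarrow> I i \<inter> I j = {}"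
    using F I unfolding G_def bij_betw_def
    by (metis DiffD1 imageI inj_onD interval_family_disjointD lessThan_iff)
  ultimately show "r \<in> J_vals x"
    unfolding J_vals_def by blast
qed

lemma sqrt_J_sum_in_J_vals: "interval_family F \<Longrightarrow> sqrt (J_sum x F) \<in> J_vals x"
  by (auto simp: J_vals_eq)

lemma J_vals_nonempty: "J_vals x \<noteq> {}"
  using sqrt_J_sum_in_J_vals[of "{}"] by (auto simp: interval_family_def)

lemma sqrt_J_sum_le_J_norm: "x \<in> J_space \<Longrightarrow> interval_family F \<Longrightarrow> sqrt (J_sum x F) \<le> J_norm x"
  using sqrt_J_sum_in_J_vals unfolding J_norm_def J_space_def by (blast intro: cSup_upper)

lemma J_norm_nonneg: "x \<in> J_space \<Longrightarrow> 0 \<le> J_norm x"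
  using sqrt_J_sum_le_J_norm[of x "{}"] by (simp add: J_sum_def interval_family_def)

lemma J_sum_le_J_norm: "x \<in> J_space \<Longrightarrow> interval_family F \<Longrightarrow> J_sum x F \<le> (J_norm x)\<^sup>2"
  by (rule sqrt_le_D[OF sqrt_J_sum_le_J_norm])

lemma J_sum_Un_le_J_norm:
  assumes "x \<in> J_space" "interval_family F" "interval_family G" "\<And>A B. A \<in> F \<Longrightarrow> B \<in> G \<Longrightarrow> A \<inter> B = {}"
  shows "J_sum x F + J_sum x G \<le> (J_norm x)\<^sup>2"
  using assms J_sum_le_J_norm[OF assms(1) interval_family_Un[OF assms(2-4)]]
  by (simp add: J_sum_Un interval_family_def)

lemma J_sum_add_two_le_J_norm:
  assumes x: "x \<in> J_space" and R: "interval_family R"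
    and CD: "order_convex C" "order_convex D" "C \<inter> D = {}" and disj: "\<And>E. E \<in> R \<Longrightarrow> E \<inter> (C \<union> D) = {}"
  shows "J_sum x R + (isum x C)\<^sup>2 + (isum x D)\<^sup>2 \<le> (J_norm x)\<^sup>2"
proof -
  have "interval_family ({C} \<union> {D})"
    using CD by (intro interval_family_Un interval_family_singleton) auto
  moreover have "E \<inter> E' = {}" if "E \<in> R" "E' \<in> {C} \<union> {D}" for E E'
    using disj[OF that(1)] that(2) by blast
  ultimately have "J_sum x R + J_sum x ({C} \<union> {D}) \<le> (J_norm x)\<^sup>2"
    by (rule J_sum_Un_le_J_norm[OF x R])
  moreover have "J_sum x ({C} \<union> {D}) = (isum x C)\<^sup>2 + (isum x D)\<^sup>2"
    using CD(3) by (subst J_sum_Un) auto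
  ultimately show ?thesis
    by simp
qed

lemma J_norm_approx:
  assumes "x \<in> J_space" "0 < e"
  shows "\<exists>F. interval_family F \<and> (J_norm x)\<^sup>2 - e < J_sum x F"
proof (cases "(J_norm x)\<^sup>2 < e")
  case True
  then show ?thesis
    by (intro exI[of _ "{}"]) (simp add: interval_family_def J_sum_def)
next
  case False
  have "sqrt ((J_norm x)\<^sup>2 - e) < sqrt ((J_norm x)\<^sup>2)"
    using assms(2) by (intro real_sqrt_less_mono) simp
  then have "sqrt ((J_norm x)\<^sup>2 - e) < J_norm x"
    using J_norm_nonneg[OF assms(1)] by simp
  then obtain r where "r \<in> J_vals x" "sqrt ((J_norm x)\<^sup>2 - e) < r"
    unfolding J_norm_def by (blast elim: less_cSupE[OF _ J_vals_nonempty])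
  then show ?thesis
    unfolding J_vals_eq using False by (auto simp: real_sqrt_less_iff)
qed

lemma J_space_J_norm_le:
  assumes "\<And>A. nat_interval A \<Longrightarrow> summable (restr x A)" "0 \<le> c"
    and "\<And>F. interval_family F \<Longrightarrow> J_sum x F \<le> c\<^sup>2"
  shows "x \<in> J_space" "J_norm x \<le> c"
proof -
  have bound: "r \<le> c" if "r \<in> J_vals x" for r
    using that assms(2,3) unfolding J_vals_eq by (auto simp: real_le_lsqrt)
  then show "x \<in> J_space"
    using assms(1) by (auto simp: J_space_def bdd_above_def)
  show "J_norm x \<le> c"
    unfolding J_norm_def using bound J_vals_nonempty by (blast intro: cSup_least)
qed

lemma l2_norm_nonneg: "summable (\<lambda>k. (x k)\<^sup>2) \<Longrightarrow> 0 \<le> l2_norm x"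
  by (simp add: l2_norm_def suminf_nonneg)

lemma l2_norm_square: "summable (\<lambda>k. (x k)\<^sup>2) \<Longrightarrow> (l2_norm x)\<^sup>2 = (\<Sum>k. (x k)\<^sup>2)"
  by (simp add: l2_norm_def suminf_nonneg)

lemma
  assumes x: "x \<in> J_space"
  shows summable_square_J_space: "summable (\<lambda>k. (x k)\<^sup>2)"
    and suminf_square_le_J_norm: "(\<Sum>k. (x k)\<^sup>2) \<le> (J_norm x)\<^sup>2"
proof -
  have partial: "(\<Sum>k<M. (x k)\<^sup>2) \<le> (J_norm x)\<^sup>2" for M
    using J_sum_le_J_norm[OF x interval_family_points[of "{..<M}"]] by (simp add: J_sum_points)
  then show summable: "summable (\<lambda>k. (x k)\<^sup>2)"
    by (intro summableI_nonneg_bounded) auto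
  show "(\<Sum>k. (x k)\<^sup>2) \<le> (J_norm x)\<^sup>2"
    by (rule suminf_le_const[OF summable partial])
qed

lemma l2_norm_le_J_norm: "x \<in> J_space \<Longrightarrow> l2_norm x \<le> J_norm x"
  unfolding l2_norm_def using suminf_square_le_J_norm J_norm_nonneg by (simp add: real_le_lsqrt)

lemma J_norm_add_point_mass:
  fixes k :: nat and c :: real
  assumes "x \<in> J_space"
  defines "y \<equiv> \<lambda>n. x n + (if n = k then c else 0)"
  shows "y \<in> J_space" "J_norm y \<le> J_norm x + \<bar>c\<bar>"
proof -
  have summable: "summable (restr y A)" if "order_convex A" for A
    unfolding y_def
    by (intro summable_restr_add summable_restr_J_space[OF assms(1) that] summable_restr_point_mass)
  have "J_sum y F \<le> (J_norm x + \<bar>c\<bar>)\<^sup>2" if F: "interval_family F" for F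
  proof (rule sqrt_le_D)
    have "sqrt (J_sum y F) \<le> sqrt (J_sum x F) + \<bar>c\<bar>"
      unfolding y_def using F F[unfolded interval_family_def] summable_restr_J_space[OF assms(1)]
      by (intro J_sum_add_point_mass_le) auto
    also have "\<dots> \<le> J_norm x + \<bar>c\<bar>"
      using sqrt_J_sum_le_J_norm[OF assms(1) F] by simp
    finally show "sqrt (J_sum y F) \<le> J_norm x + \<bar>c\<bar>" .
  qed
  moreover have "summable (restr y A)" if "nat_interval A" for A
    using summable that by (simp add: nat_interval_iff)
  ultimately show "y \<in> J_space" "J_norm y \<le> J_norm x + \<bar>c\<bar>"
    using J_space_J_norm_le[of y "J_norm x + \<bar>c\<bar>"] J_norm_nonneg[OF assms(1)] by auto
qed

lemma extreme_point_seq_perturb: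
  assumes "extreme_point_seq x S" "(\<lambda>n. x n + d n) \<in> S" "(\<lambda>n. x n - d n) \<in> S"
  shows "d n = 0"
proof (rule ccontr)
  assume "d n \<noteq> 0"
  then have "(\<lambda>n. x n + d n) \<noteq> (\<lambda>n. x n - d n)"
    by (auto simp: fun_eq_iff)
  moreover have "\<forall>t. (\<lambda>n. x n + d n) \<noteq> (\<lambda>n. x n - d n) \<and> 0 < t \<and> t < 1 \<longrightarrow>
      x \<noteq> (\<lambda>n. (1 - t) * (x n + d n) + t * (x n - d n))"
    using assms unfolding extreme_point_seq_def by blast
  moreover have "x = (\<lambda>n. (1 - 1/2) * (x n + d n) + 1/2 * (x n - d n))"
    by (simp add: fun_eq_iff field_simps)
  ultimately show False
    by (auto dest: spec[of _ "1/2"])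
qed

lemma J_norm_extreme_point:
  assumes x: "x \<in> J_space" and extreme: "extreme_point_seq x B_J"
  shows "J_norm x = 1"
proof (rule ccontr)
  define \<delta> where "\<delta> = 1 - J_norm x"
  assume "J_norm x \<noteq> 1"
  moreover have "J_norm x \<le> 1"
    using extreme by (simp add: extreme_point_seq_def B_J_def)
  ultimately have "0 < \<delta>"
    by (simp add: \<delta>_def)
  have in_B_J: "(\<lambda>n. x n + (if n = 0 then c else 0)) \<in> B_J" if "\<bar>c\<bar> = \<delta>" for c
    using J_norm_add_point_mass[OF x, of 0 c] that by (simp add: B_J_def \<delta>_def)
  define d where "d = (\<lambda>n::nat. if n = 0 then \<delta> else 0)"
  have "(\<lambda>n. x n - d n) = (\<lambda>n. x n + (if n = 0 then - \<delta> else 0))"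
    by (simp add: d_def fun_eq_iff)
  then have "(\<lambda>n. x n + d n) \<in> B_J" "(\<lambda>n. x n - d n) \<in> B_J"
    using in_B_J[of \<delta>] in_B_J[of "- \<delta>"] \<open>0 < \<delta>\<close> by (simp_all add: d_def)
  then have "d 0 = 0"
    by (rule extreme_point_seq_perturb[OF extreme])
  then show False
    using \<open>0 < \<delta>\<close> by (simp add: d_def)
qed

lemma J_sum_le_if_sqrt_le:
  assumes "x \<in> J_space" "interval_family G" "sqrt (J_sum y G) \<le> sqrt (J_sum x G) + t"
  shows "J_sum y G \<le> J_sum x G + 2 * \<bar>t\<bar> * J_norm x + t\<^sup>2"
proof -
  have "J_sum y G \<le> (sqrt (J_sum x G) + \<bar>t\<bar>)\<^sup>2"
    using assms(3) by (intro sqrt_le_D) linarith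
  also have "\<dots> = J_sum x G + 2 * \<bar>t\<bar> * sqrt (J_sum x G) + t\<^sup>2"
    by (simp add: power2_sum J_sum_nonneg algebra_simps)
  also have "\<dots> \<le> J_sum x G + 2 * \<bar>t\<bar> * J_norm x + t\<^sup>2"
    using sqrt_J_sum_le_J_norm[OF assms(1,2)] by (simp add: mult_left_mono)
  finally show ?thesis .
qed

lemma J_sum_add_dipole_le:
  assumes x: "x \<in> J_space" and F: "interval_family F" and "0 < N"
    and split: "\<forall>A\<in>F. A \<subseteq> {..<N} \<or> A \<subseteq> {N..}"
  shows "J_sum (\<lambda>n. x n + (if n = N - 1 then c else 0) + (if n = N then - c else 0)) F
           \<le> J_sum x F + 4 * \<bar>c\<bar> * J_norm x + 2 * c\<^sup>2"
proof -
  define z where "z = (\<lambda>n. x n + (if n = N - 1 then c else 0))"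
  define y where "y = (\<lambda>n. z n + (if n = N then - c else 0))"
  define L where "L = {A \<in> F. A \<subseteq> {..<N}}"
  define R where "R = F - L"
  have L: "interval_family L" "L \<subseteq> F" and R: "interval_family R" "R \<subseteq> F"
    using F by (auto simp: L_def R_def intro: interval_family_subset)
  have summable_x: "summable (restr x A)" and summable_z: "summable (restr z A)" if "A \<in> F" for A
    using F that summable_restr_J_space[OF x] unfolding z_def interval_family_def
    by (auto intro: summable_restr_add_point_mass)
  have "N \<notin> \<Union>L"
    by (auto simp: L_def)
  have "A \<subseteq> {N..}" if "A \<in> R" for A
    using split that by (auto simp: L_def R_def)
  then have "N - 1 \<notin> \<Union>R"
    using \<open>0 < N\<close> by fastforce
  have bound: "J_sum y G \<le> J_sum x G + 2 * \<bar>c\<bar> * J_norm x + c\<^sup>2"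
    if "sqrt (J_sum y G) \<le> sqrt (J_sum x G) + \<bar>c\<bar>" "interval_family G" for G
    using J_sum_le_if_sqrt_le[OF x that(2,1)] by simp
  have "J_sum y L = J_sum z L"
    unfolding y_def using L(2) summable_z by (intro J_sum_add_point_mass_outside[OF \<open>N \<notin> \<Union>L\<close>]) blast
  moreover have "sqrt (J_sum z L) \<le> sqrt (J_sum x L) + \<bar>c\<bar>"
    unfolding z_def using L summable_x by (intro J_sum_add_point_mass_le) blast+
  ultimately have y_L: "J_sum y L \<le> J_sum x L + 2 * \<bar>c\<bar> * J_norm x + c\<^sup>2"
    using L(1) by (intro bound) simp_all
  moreover have "J_sum z R = J_sum x R"
    unfolding z_def using R(2) summable_x by (intro J_sum_add_point_mass_outside[OF \<open>N - 1 \<notin> \<Union>R\<close>]) blast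
  moreover have "sqrt (J_sum y R) \<le> sqrt (J_sum z R) + \<bar>c\<bar>"
    unfolding y_def using R summable_z J_sum_add_point_mass_le[of R z N "- c"] by (simp add: subset_iff)
  ultimately have y_R: "J_sum y R \<le> J_sum x R + 2 * \<bar>c\<bar> * J_norm x + c\<^sup>2"
    using R(1) by (intro bound) simp_all
  have split_sum: "J_sum u F = J_sum u R + J_sum u L" for u
    unfolding J_sum_def R_def by (rule sum.subset_diff[OF L(2)]) (use F in \<open>simp add: interval_family_def\<close>)
  show ?thesis
    using split_sum[of y] split_sum[of x] y_L y_R unfolding y_def z_def by linarith
qed

lemma J_sum_add_dipole_eq:
  assumes "\<And>A. A \<in> F \<Longrightarrow> summable (restr x A)" "\<forall>A\<in>F. N - 1 \<in> A \<longleftrightarrow> N \<in> A"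
  shows "J_sum (\<lambda>n. x n + (if n = N - 1 then c else 0) + (if n = N then - c else 0)) F = J_sum x F"
  unfolding J_sum_def using assms
  by (intro sum.cong) (simp_all add: isum_add_point_mass summable_restr_add_point_mass)

lemma dipole_perturbation_in_B_J:
  assumes x: "x \<in> J_space" "J_norm x \<le> 1" and "0 < N"
    and gap: "\<And>F. interval_family F \<Longrightarrow> \<forall>A\<in>F. A \<subseteq> {..<N} \<or> A \<subseteq> {N..} \<Longrightarrow> J_sum x F \<le> (J_norm x)\<^sup>2 - e"
    and small: "\<bar>c\<bar> \<le> 1" "6 * \<bar>c\<bar> \<le> e"
  shows "(\<lambda>n. x n + (if n = N - 1 then c else 0) + (if n = N then - c else 0)) \<in> B_J"
proof -
  define y where "y = (\<lambda>n. x n + (if n = N - 1 then c else 0) + (if n = N then - c else 0))"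
  have summable_x: "summable (restr x A)" if "order_convex A" for A
    using summable_restr_J_space[OF x(1) that] .
  then have summable_y: "summable (restr y A)" if "order_convex A" for A
    unfolding y_def using that by (intro summable_restr_add_point_mass)
  have "0 \<le> J_norm x"
    using J_norm_nonneg[OF x(1)] .
  then have "(J_norm x)\<^sup>2 \<le> 1"
    using x(2) by (simp add: power_le_one)
  have "4 * \<bar>c\<bar> * J_norm x + 2 * c\<^sup>2 \<le> e"
  proof -
    have "\<bar>c\<bar> * J_norm x \<le> \<bar>c\<bar>"
      using x(2) by (simp add: mult_left_le)
    moreover have "c\<^sup>2 \<le> \<bar>c\<bar>"
      using mult_left_le[OF small(1), of "\<bar>c\<bar>"] by (simp add: power2_eq_square)
    ultimately show ?thesis
      using small(2) by linarith
  qed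
  have "J_sum y F \<le> 1" if F: "interval_family F" for F
  proof (cases "\<forall>A\<in>F. N - 1 \<in> A \<longleftrightarrow> N \<in> A")
    case True
    then have "J_sum y F = J_sum x F"
      unfolding y_def using F summable_x by (intro J_sum_add_dipole_eq) (simp_all add: interval_family_def)
    then show ?thesis
      using J_sum_le_J_norm[OF x(1) F] \<open>(J_norm x)\<^sup>2 \<le> 1\<close> by simp
  next
    case False
    then obtain A0 where "A0 \<in> F" "N - 1 \<in> A0 \<longleftrightarrow> N \<notin> A0"
      by blast
    then have split: "\<forall>A\<in>F. A \<subseteq> {..<N} \<or> A \<subseteq> {N..}"
      using interval_family_split[OF F \<open>0 < N\<close>] by blast
    have "J_sum y F \<le> J_sum x F + 4 * \<bar>c\<bar> * J_norm x + 2 * c\<^sup>2"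
      unfolding y_def by (rule J_sum_add_dipole_le[OF x(1) F \<open>0 < N\<close> split])
    then show ?thesis
      using gap[OF F split] \<open>4 * \<bar>c\<bar> * J_norm x + 2 * c\<^sup>2 \<le> e\<close> \<open>(J_norm x)\<^sup>2 \<le> 1\<close> by linarith
  qed
  then have "y \<in> J_space" "J_norm y \<le> 1"
    using J_space_J_norm_le[of y 1] summable_y by (auto simp: nat_interval_iff)
  then show ?thesis
    by (simp add: B_J_def y_def)
qed

lemma extreme_point_split_approx:
  assumes x: "x \<in> J_space" and extreme: "extreme_point_seq x B_J" and "0 < e"
  shows "\<exists>F. interval_family F \<and> (\<forall>A\<in>F. A \<subseteq> {..<N} \<or> A \<subseteq> {N..}) \<and> (J_norm x)\<^sup>2 - e < J_sum x F"
proof (cases "N = 0")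
  case True
  then show ?thesis
    using J_norm_approx[OF x \<open>0 < e\<close>] by auto
next
  case False
  show ?thesis
  proof (rule ccontr)
    assume "\<not> ?thesis"
    then have gap: "J_sum x F \<le> (J_norm x)\<^sup>2 - e"
      if "interval_family F" "\<forall>A\<in>F. A \<subseteq> {..<N} \<or> A \<subseteq> {N..}" for F
      using that by (meson not_less)
    have "J_norm x \<le> 1"
      using extreme by (simp add: extreme_point_seq_def B_J_def)
    define \<delta> where "\<delta> = min 1 (e / 6)"
    have "0 < \<delta>"
      using \<open>0 < e\<close> by (simp add: \<delta>_def)
    have "\<delta> \<le> 1" "6 * \<delta> \<le> e"
      by (simp_all add: \<delta>_def)
    define d where "d = (\<lambda>n. (if n = N - 1 then \<delta> else 0) + (if n = N then - \<delta> else 0))"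
    have "(\<lambda>n. x n + d n) = (\<lambda>n. x n + (if n = N - 1 then \<delta> else 0) + (if n = N then - \<delta> else 0))"
      "(\<lambda>n. x n - d n) = (\<lambda>n. x n + (if n = N - 1 then - \<delta> else 0) + (if n = N then - (- \<delta>) else 0))"
      by (auto simp: d_def fun_eq_iff)
    then have "(\<lambda>n. x n + d n) \<in> B_J" "(\<lambda>n. x n - d n) \<in> B_J"
      using dipole_perturbation_in_B_J[OF x \<open>J_norm x \<le> 1\<close> _ gap, where c = \<delta>]
        dipole_perturbation_in_B_J[OF x \<open>J_norm x \<le> 1\<close> _ gap, where c = "- \<delta>"]
        False \<open>0 < \<delta>\<close> \<open>\<delta> \<le> 1\<close> \<open>6 * \<delta> \<le> e\<close> by simp_all
    then have "d (N - 1) = 0"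
      by (rule extreme_point_seq_perturb[OF extreme])
    moreover have "N - 1 \<noteq> N"
      using False by simp
    ultimately show False
      using \<open>0 < \<delta>\<close> by (simp add: d_def)
  qed
qed

lemma overlap_square_ineq:
  fixes u v w :: real
  shows "(u + w)\<^sup>2 + (w + v)\<^sup>2 \<le> w\<^sup>2 + max ((u + w + v)\<^sup>2) (max ((u + w)\<^sup>2 + v\<^sup>2) (u\<^sup>2 + (w + v)\<^sup>2))"
proof -
  have "0 \<le> u * v \<or> w * v \<le> 0 \<or> w * u \<le> 0"
  proof (rule ccontr)
    assume "\<not> ?thesis"
    then have "0 < (w * u) * (w * v)" "w\<^sup>2 * (u * v) \<le> 0"
      by (simp_all add: mult_nonneg_nonpos)
    moreover have "(w * u) * (w * v) = w\<^sup>2 * (u * v)"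
      by (simp add: power2_eq_square algebra_simps)
    ultimately show False
      by linarith
  qed
  moreover have "(u + w)\<^sup>2 + (w + v)\<^sup>2 = w\<^sup>2 + (u + w + v)\<^sup>2 - 2 * (u * v)"
    and "(u + w)\<^sup>2 + (w + v)\<^sup>2 = w\<^sup>2 + ((u + w)\<^sup>2 + v\<^sup>2) + 2 * (w * v)"
    and "(u + w)\<^sup>2 + (w + v)\<^sup>2 = w\<^sup>2 + (u\<^sup>2 + (w + v)\<^sup>2) + 2 * (w * u)"
    by (simp_all add: power2_eq_square algebra_simps)
  ultimately show ?thesis
    by (smt (verit) max.cobounded1 max.cobounded2)
qed

lemma J_sum_overlapping_pair_le:
  assumes x: "x \<in> J_space" and R: "interval_family R"
    and A: "order_convex A" "A \<subseteq> {..N}" "N \<in> A" and B: "order_convex B" "B \<subseteq> {N..}" "N \<in> B"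
    and disj: "\<And>C. C \<in> R \<Longrightarrow> C \<inter> (A \<union> B) = {}"
  shows "J_sum x R + (isum x A)\<^sup>2 + (isum x B)\<^sup>2 \<le> (J_norm x)\<^sup>2 + (x N)\<^sup>2"
proof -
  define U where "U = A \<inter> {..<N}"
  define V where "V = B \<inter> {Suc N..}"
  have "order_convex U" "order_convex V"
    using A(1) B(1) by (simp_all add: U_def V_def order_convex_Int)
  have "A = U \<union> {N}" "B = {N} \<union> V"
    using A(2,3) B(2,3) by (auto simp: U_def V_def)
  have "U \<inter> B = {}" "A \<inter> V = {}"
    using A(2) B(2) by (auto simp: U_def V_def)
  have pair: "J_sum x R + (isum x C)\<^sup>2 + (isum x D)\<^sup>2 \<le> (J_norm x)\<^sup>2"
    if "order_convex C" "order_convex D" "C \<inter> D = {}" "C \<union> D \<subseteq> A \<union> B" for C D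
  proof (rule J_sum_add_two_le_J_norm[OF x R that(1-3)])
    fix E
    assume "E \<in> R"
    then show "E \<inter> (C \<union> D) = {}"
      using disj that(4) by blast
  qed
  have summable: "summable (restr x C)" if "order_convex C" for C
    using summable_restr_J_space[OF x that] .
  have "U \<inter> {N} = {}" "{N} \<inter> V = {}"
    by (auto simp: U_def V_def)
  then have "isum x A = isum x U + x N" "isum x B = x N + isum x V"
    using summable[OF \<open>order_convex U\<close>] summable[OF \<open>order_convex V\<close>] summable[of "{N}"]
      isum_Un[of U "{N}" x] isum_Un[of "{N}" V x]
    unfolding \<open>A = U \<union> {N}\<close> \<open>B = {N} \<union> V\<close> by simp_all
  have "A \<union> B = A \<union> V"
    using \<open>B = {N} \<union> V\<close> A(3) by auto
  then have "isum x (A \<union> B) = isum x U + x N + isum x V"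
    using \<open>A \<inter> V = {}\<close> summable[OF A(1)] summable[OF \<open>order_convex V\<close>] \<open>isum x A = isum x U + x N\<close>
    by (simp add: isum_Un)
  have "order_convex (A \<union> B)"
    using A(1) B(1) A(3) B(3) by (rule order_convex_Un)
  have "J_sum x R + (isum x (A \<union> B))\<^sup>2 + (isum x {})\<^sup>2 \<le> (J_norm x)\<^sup>2"
    using \<open>order_convex (A \<union> B)\<close> by (intro pair) simp_all
  moreover have "J_sum x R + (isum x A)\<^sup>2 + (isum x V)\<^sup>2 \<le> (J_norm x)\<^sup>2"
    using A(1) \<open>order_convex V\<close> \<open>A \<inter> V = {}\<close> \<open>A \<union> B = A \<union> V\<close> by (intro pair) simp_all
  moreover have "J_sum x R + (isum x U)\<^sup>2 + (isum x B)\<^sup>2 \<le> (J_norm x)\<^sup>2"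
    using \<open>order_convex U\<close> B(1) \<open>U \<inter> B = {}\<close> \<open>A = U \<union> {N}\<close> by (intro pair) auto
  ultimately show ?thesis
    using overlap_square_ineq[of "isum x U" "x N" "isum x V"] \<open>isum x A = isum x U + x N\<close>
      \<open>isum x B = x N + isum x V\<close> \<open>isum x (A \<union> B) = isum x U + x N + isum x V\<close> by simp
qed

lemma J_sum_overlap_common_point_le:
  assumes x: "x \<in> J_space"
    and F: "interval_family F" "\<forall>C\<in>F. C \<subseteq> {..N}" and A: "A \<in> F" "N \<in> A"
    and G: "interval_family G" "\<forall>C\<in>G. C \<subseteq> {N..}" and B: "B \<in> G" "N \<in> B"
  shows "J_sum x F + J_sum x G \<le> (J_norm x)\<^sup>2 + (x N)\<^sup>2"
proof -
  have avoid_A: "C \<inter> A = {}" if "C \<in> F - {A}" for C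
    using that A(1) by (intro interval_family_disjointD[OF F(1)]) auto
  have avoid_B: "C \<inter> B = {}" if "C \<in> G - {B}" for C
    using that B(1) by (intro interval_family_disjointD[OF G(1)]) auto
  have left: "C \<subseteq> {..<N}" if "C \<in> F - {A}" for C
    using that F(2) avoid_A[OF that] A(2) by (auto simp: subset_iff less_le)
  have right: "C \<subseteq> {Suc N..}" if "C \<in> G - {B}" for C
    using that G(2) avoid_B[OF that] B(2) by (auto simp: subset_iff Suc_le_eq less_le)
  have cross_left: "C \<inter> D = {}" if "C \<in> F - {A}" "D \<in> G" for C D
    using left[OF that(1)] G(2) that(2) by fastforce
  have cross_right: "C \<inter> D = {}" if "C \<in> F" "D \<in> G - {B}" for C D
    using right[OF that(2)] F(2) that(1) by fastforce
  define R where "R = (F - {A}) \<union> (G - {B})"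
  have R: "interval_family R"
    unfolding R_def using cross_left
    by (intro interval_family_Un interval_family_subset[OF F(1) Diff_subset]
        interval_family_subset[OF G(1) Diff_subset]) blast
  have "C \<inter> (A \<union> B) = {}" if "C \<in> R" for C
  proof -
    from that consider "C \<in> F - {A}" | "C \<in> G - {B}"
      unfolding R_def by blast
    then show ?thesis
    proof cases
      case 1
      then show ?thesis
        using avoid_A[OF 1] cross_left[OF 1 B(1)] by blast
    next
      case 2
      then show ?thesis
        using avoid_B[OF 2] cross_right[OF A(1) 2] by blast
    qed
  qed
  then have "J_sum x R + (isum x A)\<^sup>2 + (isum x B)\<^sup>2 \<le> (J_norm x)\<^sup>2 + (x N)\<^sup>2"
    using A B F G by (intro J_sum_overlapping_pair_le[OF x R]) (simp_all add: interval_family_def)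
  moreover have "J_sum x R = J_sum x (F - {A}) + J_sum x (G - {B})"
    unfolding R_def using F(1) G(1) cross_left by (intro J_sum_Un) (simp_all add: interval_family_def)
  moreover have "J_sum x F = J_sum x (F - {A}) + (isum x A)\<^sup>2" "J_sum x G = J_sum x (G - {B}) + (isum x B)\<^sup>2"
    using A B F(1) G(1) by (simp_all add: J_sum_remove interval_family_def)
  ultimately show ?thesis
    by linarith
qed

lemma J_sum_overlap_le:
  assumes x: "x \<in> J_space"
    and F: "interval_family F" "\<forall>A\<in>F. A \<subseteq> {..N}" and G: "interval_family G" "\<forall>B\<in>G. B \<subseteq> {N..}"
  shows "J_sum x F + J_sum x G \<le> (J_norm x)\<^sup>2 + (x N)\<^sup>2"
proof (cases "\<exists>A\<in>F. \<exists>B\<in>G. N \<in> A \<and> N \<in> B")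
  case True
  then show ?thesis
    using J_sum_overlap_common_point_le[OF x F _ _ G] by blast
next
  case False
  have "A \<inter> B = {}" if "A \<in> F" "B \<in> G" for A B
  proof -
    have "A \<inter> B \<subseteq> {N}"
      using F(2) G(2) that by fastforce
    then show ?thesis
      using False that by blast
  qed
  then have "J_sum x F + J_sum x G \<le> (J_norm x)\<^sup>2"
    by (rule J_sum_Un_le_J_norm[OF x F(1) G(1)])
  then show ?thesis
    using zero_le_power2[of "x N"] by linarith
qed

lemma J_sum_le_partial_square_sum:
  assumes x: "x \<in> J_space" and extreme: "extreme_point_seq x B_J"
  shows "interval_family F \<Longrightarrow> \<forall>A\<in>F. A \<subseteq> {..<N} \<Longrightarrow> J_sum x F \<le> (\<Sum>k<N. (x k)\<^sup>2)"
proof (induction N arbitrary: F)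
  case 0
  then have "\<forall>A\<in>F. isum x A = 0"
    by auto
  then show ?case
    by (simp add: J_sum_def)
next
  case (Suc N)
  show ?case
  proof (rule field_le_epsilon)
    fix e :: real
    assume "0 < e"
    then obtain H where H: "interval_family H" "\<forall>A\<in>H. A \<subseteq> {..<N} \<or> A \<subseteq> {N..}"
      and approx: "(J_norm x)\<^sup>2 - e < J_sum x H"
      using extreme_point_split_approx[OF x extreme] by blast
    define H1 where "H1 = {A \<in> H. A \<subseteq> {..<N}}"
    have H1: "interval_family H1" "\<forall>A\<in>H1. A \<subseteq> {..<N}"
      using H(1) by (auto simp: H1_def intro: interval_family_subset)
    have H2: "interval_family (H - H1)" "\<forall>A\<in>H - H1. A \<subseteq> {N..}"
      using H by (auto simp: H1_def intro: interval_family_subset)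
    have "J_sum x H = J_sum x (H - H1) + J_sum x H1"
      unfolding J_sum_def by (rule sum.subset_diff) (use H(1) in \<open>auto simp: H1_def interval_family_def\<close>)
    moreover have "J_sum x F + J_sum x (H - H1) \<le> (J_norm x)\<^sup>2 + (x N)\<^sup>2"
      using Suc.prems by (intro J_sum_overlap_le[OF x _ _ H2]) (auto simp: lessThan_Suc_atMost)
    moreover have "J_sum x H1 \<le> (\<Sum>k<N. (x k)\<^sup>2)"
      using Suc.IH[OF H1] .
    ultimately show "J_sum x F \<le> (\<Sum>k<Suc N. (x k)\<^sup>2) + e"
      using approx by simp
  qed
qed

lemma J_norm_le_l2_norm_extreme_point:
  assumes x: "x \<in> J_space" and extreme: "extreme_point_seq x B_J"
  shows "J_norm x \<le> l2_norm x"
proof -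
  have summable: "summable (\<lambda>k. (x k)\<^sup>2)"
    by (rule summable_square_J_space[OF x])
  have "J_sum x F \<le> (l2_norm x)\<^sup>2" if F: "interval_family F" for F
  proof -
    have "(\<Sum>A\<in>F. (isum x (A \<inter> {..<M}))\<^sup>2) \<le> (\<Sum>k. (x k)\<^sup>2)" for M
    proof -
      have "(\<Sum>A\<in>F. (isum x (A \<inter> {..<M}))\<^sup>2) \<le> (\<Sum>k<M. (x k)\<^sup>2)"
        unfolding J_sum_Int_lessThan[OF F, symmetric]
        by (rule J_sum_le_partial_square_sum[OF x extreme interval_family_Int_lessThan[OF F]]) auto
      also have "\<dots> \<le> (\<Sum>k. (x k)\<^sup>2)"
        by (rule sum_le_suminf[OF summable]) auto
      finally show ?thesis .
    qed
    moreover have "(\<lambda>M. \<Sum>A\<in>F. (isum x (A \<inter> {..<M}))\<^sup>2) \<longlonglongrightarrow> J_sum x F"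
      unfolding J_sum_def using F summable_restr_J_space[OF x]
      by (intro tendsto_sum tendsto_power tendsto_isum_Int_lessThan) (auto simp: interval_family_def)
    ultimately have "J_sum x F \<le> (\<Sum>k. (x k)\<^sup>2)"
      by (intro LIMSEQ_le_const2) auto
    then show ?thesis
      using l2_norm_square[OF summable] by simp
  qed
  moreover have "0 \<le> l2_norm x"
    using summable by (rule l2_norm_nonneg)
  ultimately show ?thesis
    using x by (intro J_space_J_norm_le(2)) (auto simp: J_space_def)
qed

lemma NPR_restr_iff: "NPR (restr x A) \<longleftrightarrow> (isum x A)\<^sup>2 \<le> (\<Sum>n. restr (\<lambda>k. (x k)\<^sup>2) A n)"
proof -
  have "(\<lambda>n. \<bar>restr x A n\<bar>\<^sup>2) = restr (\<lambda>k. (x k)\<^sup>2) A"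
    by (auto simp: restr_def)
  then show ?thesis
    by (simp add: NPR_def isum_def)
qed

lemma NPR_hered_if_J_norm_le_l2_norm:
  assumes x: "x \<in> J_space" and le: "J_norm x \<le> l2_norm x"
  shows "NPR_hered x"
  unfolding NPR_hered_def
proof (intro allI impI)
  fix I
  assume I: "nat_interval I"
  define f where "f = (\<lambda>k. (x k)\<^sup>2)"
  have f: "summable f" "\<And>k. 0 \<le> f k"
    using summable_square_J_space[OF x] by (simp_all add: f_def)
  have "(J_norm x)\<^sup>2 \<le> suminf f"
  proof -
    have "(J_norm x)\<^sup>2 \<le> (l2_norm x)\<^sup>2"
      using le J_norm_nonneg[OF x] by (rule power_mono)
    then show ?thesis
      using l2_norm_square summable_square_J_space[OF x] by (simp add: f_def)
  qed
  have partial: "(isum x I)\<^sup>2 + (\<Sum>k<M. restr f (- I) k) \<le> suminf f" for M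
  proof -
    define P where "P = (\<lambda>k. {k}) ` ({..<M} - I)"
    have disj: "I \<inter> C = {}" if "C \<in> P" for C
      using that by (auto simp: P_def)
    have "interval_family ({I} \<union> P)"
      using I disj unfolding P_def
      by (intro interval_family_Un interval_family_singleton interval_family_points) (auto simp: nat_interval_iff)
    moreover have "J_sum x ({I} \<union> P) = (isum x I)\<^sup>2 + J_sum x P"
      using disj by (subst J_sum_Un) (auto simp: P_def)
    moreover have "J_sum x P = (\<Sum>k<M. restr f (- I) k)"
      by (simp add: P_def J_sum_points f_def restr_def sum.inter_restrict Diff_eq)
    ultimately have "(isum x I)\<^sup>2 + (\<Sum>k<M. restr f (- I) k) \<le> (J_norm x)\<^sup>2"
      using J_sum_le_J_norm[OF x] by metis
    then show ?thesis
      using \<open>(J_norm x)\<^sup>2 \<le> suminf f\<close> by linarith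
  qed
  have "(\<lambda>M. (isum x I)\<^sup>2 + (\<Sum>k<M. restr f (- I) k)) \<longlonglongrightarrow> (isum x I)\<^sup>2 + suminf (restr f (- I))"
    using f by (intro tendsto_add tendsto_const summable_LIMSEQ summable_restr_nonneg)
  then have "(isum x I)\<^sup>2 + suminf (restr f (- I)) \<le> suminf f"
    using partial by (intro LIMSEQ_le_const2) auto
  then show "NPR (restr x I)"
    unfolding NPR_restr_iff using suminf_restr_Compl[OF f, of I] by (simp add: f_def)
qed

lemma J_norm_le_l2_norm_if_NPR_hered:
  assumes x: "x \<in> J_space" and npr: "NPR_hered x"
  shows "J_norm x \<le> l2_norm x"
proof -
  define f where "f = (\<lambda>k. (x k)\<^sup>2)"
  have f: "summable f" "\<And>k. 0 \<le> f k"
    using summable_square_J_space[OF x] by (simp_all add: f_def)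
  have block: "(isum x A)\<^sup>2 \<le> suminf (restr f A)" if "order_convex A" for A
  proof (cases "A = {}")
    case True
    then show ?thesis
      by (simp add: restr_def)
  next
    case False
    then have "NPR (restr x A)"
      using npr that by (simp add: NPR_hered_def nat_interval_iff)
    then show ?thesis
      by (simp add: NPR_restr_iff f_def)
  qed
  have "J_sum x F \<le> (l2_norm x)\<^sup>2" if F: "interval_family F" for F
  proof -
    have "J_sum x F \<le> (\<Sum>A\<in>F. suminf (restr f A))"
      unfolding J_sum_def using F block by (intro sum_mono) (simp add: interval_family_def)
    also have "\<dots> = (\<Sum>k. \<Sum>A\<in>F. restr f A k)"
      using f by (intro suminf_sum[symmetric] summable_restr_nonneg)
    also have "\<dots> = suminf (restr f (\<Union>F))"
      using F by (simp add: sum_restr_disjoint interval_family_def)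
    also have "\<dots> \<le> suminf f"
      using f by (intro suminf_le summable_restr_nonneg) (auto simp: restr_def)
    finally show ?thesis
      using l2_norm_square[of x] f by (simp add: f_def)
  qed
  moreover have "0 \<le> l2_norm x"
    using f(1) by (simp add: l2_norm_nonneg f_def)
  ultimately show ?thesis
    using x by (intro J_space_J_norm_le(2)) (auto simp: J_space_def)
qed

lemma J_norm_eq_l2_norm_iff:
  assumes "x \<in> J_space"
  shows "J_norm x = l2_norm x \<longleftrightarrow> NPR_hered x"
proof
  assume "J_norm x = l2_norm x"
  then show "NPR_hered x"
    using NPR_hered_if_J_norm_le_l2_norm[OF assms] by simp
next
  assume "NPR_hered x"
  then have "J_norm x \<le> l2_norm x"
    by (rule J_norm_le_l2_norm_if_NPR_hered[OF assms])
  then show "J_norm x = l2_norm x"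
    using l2_norm_le_J_norm[OF assms] by (rule order.antisym)
qed

lemma summable_square_diff:
  fixes a b :: "nat \<Rightarrow> real"
  assumes "summable (\<lambda>k. (a k)\<^sup>2)" "summable (\<lambda>k. (b k)\<^sup>2)"
  shows "summable (\<lambda>k. (a k - b k)\<^sup>2)"
proof (rule summable_comparison_test')
  show "summable (\<lambda>k. 2 * (a k)\<^sup>2 + 2 * (b k)\<^sup>2)"
    using assms by (intro summable_add summable_mult)
  show "norm ((a k - b k)\<^sup>2) \<le> 2 * (a k)\<^sup>2 + 2 * (b k)\<^sup>2" for k
  proof -
    have "(a k - b k)\<^sup>2 + (a k + b k)\<^sup>2 = 2 * (a k)\<^sup>2 + 2 * (b k)\<^sup>2"
      by (simp add: power2_eq_square algebra_simps)
    then have "(a k - b k)\<^sup>2 \<le> 2 * (a k)\<^sup>2 + 2 * (b k)\<^sup>2"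
      using zero_le_power2[of "a k + b k"] by linarith
    then show ?thesis
      by simp
  qed
qed

lemma l2_norm_convex_combination_less_one:
  assumes a: "summable (\<lambda>k. (a k)\<^sup>2)" "l2_norm a \<le> 1" and b: "summable (\<lambda>k. (b k)\<^sup>2)" "l2_norm b \<le> 1"
    and "a \<noteq> b" "0 < t" "t < 1"
  shows "l2_norm (\<lambda>k. (1 - t) * a k + t * b k) < 1"
proof -
  define g where "g = (\<lambda>k. t * (1 - t) * (a k - b k)\<^sup>2)"
  have combination: "((1 - t) * a k + t * b k)\<^sup>2 = (1 - t) * (a k)\<^sup>2 + t * (b k)\<^sup>2 - g k" for k
    by (simp add: g_def power2_eq_square algebra_simps)
  have "summable (\<lambda>k. (a k - b k)\<^sup>2)"
    using a(1) b(1) by (rule summable_square_diff)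
  then have "summable g"
    unfolding g_def by (rule summable_mult)
  moreover obtain i where "a i \<noteq> b i"
    using \<open>a \<noteq> b\<close> by auto
  ultimately have "0 < suminf g"
    using \<open>0 < t\<close> \<open>t < 1\<close> by (intro suminf_pos2[of _ i]) (auto simp: g_def)
  have sa: "(\<Sum>k. (a k)\<^sup>2) \<le> 1" and sb: "(\<Sum>k. (b k)\<^sup>2) \<le> 1"
    using a(2) b(2) sqrt_le_D[of _ 1] by (simp_all add: l2_norm_def)
  have sa': "summable (\<lambda>k. (1 - t) * (a k)\<^sup>2)" and sb': "summable (\<lambda>k. t * (b k)\<^sup>2)"
    using a(1) b(1) by (simp_all add: summable_mult)
  have "(\<Sum>k. ((1 - t) * a k + t * b k)\<^sup>2) = (\<Sum>k. (1 - t) * (a k)\<^sup>2 + t * (b k)\<^sup>2) - suminf g"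
    unfolding combination using sa' sb' \<open>summable g\<close> by (intro suminf_diff[symmetric] summable_add)
  also have "\<dots> = (1 - t) * (\<Sum>k. (a k)\<^sup>2) + t * (\<Sum>k. (b k)\<^sup>2) - suminf g"
    using sa' sb' a(1) b(1) by (simp add: suminf_add[symmetric] suminf_mult)
  also have "\<dots> < 1"
  proof -
    have "(1 - t) * (\<Sum>k. (a k)\<^sup>2) \<le> 1 - t" "t * (\<Sum>k. (b k)\<^sup>2) \<le> t"
      using mult_left_mono[OF sa, of "1 - t"] mult_left_mono[OF sb, of t] \<open>0 < t\<close> \<open>t < 1\<close> by simp_all
    then show ?thesis
      using \<open>0 < suminf g\<close> by linarith
  qed
  finally show ?thesis
    by (simp add: l2_norm_def)
qed

lemma extreme_point_seq_B_J_if_l2_norm_eq_one: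
  assumes "x \<in> B_J" "l2_norm x = 1"
  shows "extreme_point_seq x B_J"
  unfolding extreme_point_seq_def
proof (intro conjI ballI allI impI)
  fix a b and t :: real
  assume "a \<in> B_J" "b \<in> B_J" "a \<noteq> b \<and> 0 < t \<and> t < 1"
  moreover have "summable (\<lambda>k. (c k)\<^sup>2)" "l2_norm c \<le> 1" if "c \<in> B_J" for c
    using that summable_square_J_space[of c] l2_norm_le_J_norm[of c] by (auto simp: B_J_def)
  ultimately have "l2_norm (\<lambda>k. (1 - t) * a k + t * b k) < 1"
    by (intro l2_norm_convex_combination_less_one) auto
  then show "x \<noteq> (\<lambda>n. (1 - t) * a n + t * b n)"
    using assms(2) by auto
qed (rule assms(1))

theorem corollary3p19:
  fixes x :: "nat \<Rightarrow> real"
  assumes "x \<in> J_space"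
  shows "extreme_point_seq x B_J \<longleftrightarrow> NPR_hered x \<and> l2_norm x = 1"
proof
  assume extreme: "extreme_point_seq x B_J"
  have "J_norm x = l2_norm x"
    using J_norm_le_l2_norm_extreme_point[OF assms extreme] l2_norm_le_J_norm[OF assms] by linarith
  then show "NPR_hered x \<and> l2_norm x = 1"
    using J_norm_eq_l2_norm_iff[OF assms] J_norm_extreme_point[OF assms extreme] by simp
next
  assume *: "NPR_hered x \<and> l2_norm x = 1"
  then have "J_norm x = 1"
    using J_norm_eq_l2_norm_iff[OF assms] by simp
  then have "x \<in> B_J"
    using assms by (simp add: B_J_def)
  then show "extreme_point_seq x B_J"
    using * by (intro extreme_point_seq_B_J_if_l2_norm_eq_one) simp_all
qed

end
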